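(* Let $f:\mathbb{R}^n\to\mathbb{R}\cup\{+\infty\}$ be a closed proper convex function, $A\in\mathbb{R}^{m\times n}$, $b\in\mathbb{R}^m$, with $\mathrm{ri}(\mathrm{dom}\,f)\cap\mathrm{im}(A)\neq\emptyset$, and consider the problem $\min_x f(x)$ subject to $Ax=b$, with Lagrangian $L(x,\lambda)=f(x)-\langle\lambda,Ax-b\rangle$. Let $(x^*,\lambda^* )$ be a saddle point of $L$ (i.e. $L(x^*,\lambda)\leqslant L(x^*,\lambda^* )\leqslant L(x,\lambda^* )$ for all $x,\lambda$). Let $H\in\mathbb{R}^{m\times m}$ be symmetric positive definite and $(A_k),(a_k),(b_k),(c_k)$ be real sequences with $a_k>0$, $c_k>0$ for all $k$, $b_k>0$ for $k\geqslant1$, satisfying $$A_{k+1}-A_k\leqslant a_k,\quad A_k=a_kb_k,\quad A_0=b_0=0,\quad c_k\geqslant a_k.$$ Let $\lambda_0\in\mathbb{R}^m$, $z_0=\lambda_0$, and for $k\geqslant0$ $$\tilde\lambda_{k+1}=\frac{1}{b_k+1}z_k+\frac{b_k}{b_k+1}\lambda_k,\qquad x_{k+1}\in\arg\min_x\Big\{f(x)-\langle\tilde\lambda_{k+1},Ax-b\rangle+\frac{c_k}{2(b_k+1)}\|Ax-b\|_H^2\Big\},$$ $$\lambda_{k+1}=\tilde\lambda_{k+1}-\frac{c_k}{b_k+1}H(Ax_{k+1}-b),\qquad z_{k+1}=z_k-a_kH(Ax_{k+1}-b),$$ where the minimizers are assumed to exist. Then for every $k\geqslant1$, $$f(x^*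 )-f(x_k)+\langle\lambda_k,Ax_k-b\rangle\leqslant\frac{\|\lambda_0-\lambda^*\|^2_{H^{-1}}}{2A_k},$$ and for every $k\geqslant0$, $$\min_{0\leqslant j\leqslant k}\|Ax_{j+1}-b\|_H^2\leqslant\frac{\|\lambda_0-\lambda^*\|^2_{H^{-1}}}{\sum_{j=0}^ka_j^2}.$$
   Context: $\|u\|_M^2=u^{\mathrm T}Mu$ for a symmetric positive definite matrix $M$; $\mathrm{ri}$ denotes relative interior and $\mathrm{im}(A)$ the range of $A$. *)

theory Defs
  imports "HOL-Analysis.Analysis" "HOL-Library.Extended_Real"
begin

text \<open>Extended-real-valued functions f : R^n -> R \<union> {+inf}, modelled with values in ereal
  (properness excludes -inf).\<close>

definition effdom :: "('a \<Rightarrow> ereal) \<Rightarrow> 'a set" where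
  "effdom f = {x. f x < \<infinity>}"

definition epigraph :: "('a \<Rightarrow> ereal) \<Rightarrow> ('a \<times> real) set" where
  "epigraph f = {(x, t). f x \<le> ereal t}"

definition proper_fun :: "('a \<Rightarrow> ereal) \<Rightarrow> bool" where
  "proper_fun f \<longleftrightarrow> (\<forall>x. f x \<noteq> -\<infinity>) \<and> effdom f \<noteq> {}"

definition convex_fun :: "('a::real_vector \<Rightarrow> ereal) \<Rightarrow> bool" where
  "convex_fun f \<longleftrightarrow> convex (epigraph f)"

definition closed_fun :: "('a::topological_space \<Rightarrow> ereal) \<Rightarrow> bool" where
  "closed_fun f \<longleftrightarrow> closed (epigraph f)"

definition Mnormsq :: "real^'m^'m \<Rightarrow> real^'m \<Rightarrow> real" where
  "Mnormsq M u = u \<bullet> (M *v u)"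

definition sym_pos_def :: "real^'m^'m \<Rightarrow> bool" where
  "sym_pos_def M \<longleftrightarrow> transpose M = M \<and> (\<forall>u. u \<noteq> 0 \<longrightarrow> u \<bullet> (M *v u) > 0)"

definition lagr :: "(real^'n \<Rightarrow> ereal) \<Rightarrow> real^'n^'m \<Rightarrow> real^'m \<Rightarrow> real^'n \<Rightarrow> real^'m \<Rightarrow> ereal" where
  "lagr f A b x l = f x - ereal (l \<bullet> (A *v x - b))"

end

theory Submission
  imports Defs
begin

(* The quantity
     E_k = A_k (f x* - f x_k + <lam_k, A x_k - b>) + |z_k - lam*|^2_(H^-1) / 2
   is a Lyapunov function of the iteration. Optimality of x_(k+1) for the penalised subproblem
   makes A^T lam_(k+1) a subgradient of f at x_(k+1); together with the saddle-point inequality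
   and A_k = a_k b_k this gives E_(k+1) + a_k^2 |A x_(k+1) - b|^2_H / 2 <= E_k.
   Since E_0 = |lam_0 - lam*|^2_(H^-1) / 2, telescoping yields both estimates. *)

lemma sym_matrix_inner_commute:
  fixes H :: "real^'m^'m"
  assumes "transpose H = H"
  shows "u \<bullet> (H *v v) = v \<bullet> (H *v u)"
  by (metis assms dot_lmul_matrix inner_commute transpose_matrix_vector)

lemma invertible_matrix_inv:
  fixes M :: "'a::semiring_1^'n^'m"
  assumes "invertible M"
  shows "M ** matrix_inv M = mat 1" and "matrix_inv M ** M = mat 1"
proof -
  have "M ** matrix_inv M = mat 1 \<and> matrix_inv M ** M = mat 1"
    using assms unfolding invertible_def matrix_inv_def by (rule someI_ex)
  then show "M ** matrix_inv M = mat 1" and "matrix_inv M ** M = mat 1" by auto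
qed

lemma sym_pos_def_invertible:
  fixes H :: "real^'m^'m"
  assumes "sym_pos_def H"
  shows "invertible H"
proof -
  have "H *v u = 0 \<Longrightarrow> u = 0" for u
    using assms unfolding sym_pos_def_def by (metis inner_zero_right less_irrefl)
  then show ?thesis
    using matrix_left_invertible_ker invertible_left_inverse by blast
qed

lemma sym_pos_def_matrix_inv_cancel:
  fixes H :: "real^'m^'m"
  assumes "sym_pos_def H"
  shows "H *v (matrix_inv H *v v) = v" and "matrix_inv H *v (H *v v) = v"
  using invertible_matrix_inv[OF sym_pos_def_invertible[OF assms]]
  by (simp_all add: matrix_vector_mul_assoc)

lemma Mnormsq_nonneg:
  assumes "sym_pos_def H"
  shows "0 \<le> Mnormsq H u"
  using assms unfolding sym_pos_def_def Mnormsq_def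
  by (cases "u = 0") (auto intro: less_imp_le)

lemma Mnormsq_matrix_inv_nonneg:
  assumes "sym_pos_def H"
  shows "0 \<le> Mnormsq (matrix_inv H) u"
proof -
  have "Mnormsq (matrix_inv H) u = Mnormsq H (matrix_inv H *v u)"
    unfolding Mnormsq_def
    by (metis assms inner_commute sym_pos_def_matrix_inv_cancel(1))
  then show ?thesis using Mnormsq_nonneg[OF assms] by simp
qed

lemma Mnormsq_add_scaleR:
  assumes "transpose H = H"
  shows "Mnormsq H (p + t *\<^sub>R d) = Mnormsq H p + 2 * t * (d \<bullet> (H *v p)) + t\<^sup>2 * Mnormsq H d"
  using sym_matrix_inner_commute[OF assms, of p d] unfolding Mnormsq_def
  by (simp add: matrix_vector_right_distrib matrix_vector_mult_scaleR inner_add_left inner_add_right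
      algebra_simps power2_eq_square)

lemma Mnormsq_matrix_inv_diff:
  assumes "sym_pos_def H"
  shows "Mnormsq (matrix_inv H) (w - t *\<^sub>R (H *v r))
           = Mnormsq (matrix_inv H) w - 2 * t * (w \<bullet> r) + t\<^sup>2 * Mnormsq H r"
proof -
  have symH: "transpose H = H" using assms unfolding sym_pos_def_def by blast
  have "(H *v r) \<bullet> (matrix_inv H *v w) = w \<bullet> r"
    by (metis assms inner_commute sym_matrix_inner_commute[OF symH] sym_pos_def_matrix_inv_cancel(1))
  then show ?thesis
    unfolding Mnormsq_def using sym_pos_def_matrix_inv_cancel(2)[OF assms, of r]
    by (simp add: matrix_vector_mult_diff_distrib matrix_vector_mult_scaleR inner_diff_left
        inner_diff_right inner_commute[of r] algebra_simps power2_eq_square)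
qed

lemma convex_funD:
  assumes "convex_fun f" and "f u = ereal Fu" and "f v = ereal Fv" and "0 \<le> t" and "t \<le> 1"
  shows "f ((1 - t) *\<^sub>R u + t *\<^sub>R v) \<le> ereal ((1 - t) * Fu + t * Fv)"
proof -
  have "(u, Fu) \<in> epigraph f" "(v, Fv) \<in> epigraph f"
    using assms(2,3) unfolding epigraph_def by auto
  then have "(1 - t) *\<^sub>R (u, Fu) + t *\<^sub>R (v, Fv) \<in> epigraph f"
    using assms(1,4,5) unfolding convex_fun_def by (intro convexD) auto
  then show ?thesis unfolding epigraph_def by simp
qed

lemma nonneg_if_quadratic_nonneg_near_zero:
  fixes D K :: real
  assumes "\<And>t. 0 < t \<Longrightarrow> t \<le> 1 \<Longrightarrow> 0 \<le> t * D + t\<^sup>2 * K"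
  shows "0 \<le> D"
proof (rule ccontr)
  assume "\<not> 0 \<le> D"
  define t where "t = min 1 (- D / (2 * (\<bar>K\<bar> + 1)))"
  have "0 < - D / (2 * (\<bar>K\<bar> + 1))"
    using \<open>\<not> 0 \<le> D\<close> by (intro divide_pos_pos) auto
  then have t: "0 < t" "t \<le> 1" unfolding t_def by auto
  have "t \<le> - D / (2 * (\<bar>K\<bar> + 1))" unfolding t_def by simp
  then have "t * \<bar>K\<bar> + t \<le> - D / 2" by (simp add: field_simps)
  moreover have "t * K \<le> t * \<bar>K\<bar>" using t by (intro mult_left_mono) auto
  moreover have "0 \<le> t * (D + t * K)"
    using assms[OF t] by (simp add: algebra_simps power2_eq_square)
  then have "0 \<le> D + t * K" using t by (simp add: zero_le_mult_iff)
  ultimately show False using t \<open>\<not> 0 \<le> D\<close> by linarith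
qed

lemma penalized_minimizer_subgradient:
  fixes f :: "real^'n \<Rightarrow> ereal" and A :: "real^'n^'m" and H :: "real^'m^'m"
  assumes "convex_fun f" and "transpose H = H" and "f xn = ereal Fn" and "f u = ereal Fu"
    and minimal: "\<And>y. f xn - ereal (l \<bullet> (A *v xn - b)) + ereal (q * Mnormsq H (A *v xn - b))
                      \<le> f y - ereal (l \<bullet> (A *v y - b)) + ereal (q * Mnormsq H (A *v y - b))"
  shows "Fn + (l - (2 * q) *\<^sub>R (H *v (A *v xn - b))) \<bullet> (A *v u - A *v xn) \<le> Fu"
proof -
  define p where "p = A *v xn - b"
  define d where "d = A *v u - A *v xn"
  define D where "D = Fu - Fn - l \<bullet> d + 2 * q * (d \<bullet> (H *v p))"
  have "0 \<le> t * D + t\<^sup>2 * (q * Mnormsq H d)" if "0 < t" "t \<le> 1" for t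
  proof -
    define y where "y = (1 - t) *\<^sub>R xn + t *\<^sub>R u"
    have fy: "f y \<le> ereal ((1 - t) * Fn + t * Fu)"
      unfolding y_def using that by (intro convex_funD assms(1,3,4)) auto
    have Ay: "A *v y - b = p + t *\<^sub>R d"
      unfolding y_def p_def d_def by (simp add: algebra_simps)
    have "ereal (Fn - l \<bullet> p + q * Mnormsq H p)
          \<le> f y - ereal (l \<bullet> (p + t *\<^sub>R d)) + ereal (q * Mnormsq H (p + t *\<^sub>R d))"
      using minimal[of y] assms(3) unfolding Ay p_def by simp
    also have "\<dots> \<le> ereal ((1 - t) * Fn + t * Fu - l \<bullet> (p + t *\<^sub>R d) + q * Mnormsq H (p + t *\<^sub>R d))"
      using fy by (cases "f y") auto
    finally show ?thesis
      unfolding Mnormsq_add_scaleR[OF assms(2)] D_def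
      by (simp add: inner_add_right algebra_simps power2_eq_square)
  qed
  then have "0 \<le> D" by (rule nonneg_if_quadratic_nonneg_near_zero)
  then show ?thesis
    unfolding D_def p_def[symmetric] d_def[symmetric]
    by (simp add: inner_diff_left inner_commute[of d] algebra_simps)
qed

lemma lagr_saddle_finite:
  assumes "proper_fun f" and "\<And>y. lagr f A b xs ls \<le> lagr f A b y ls"
  shows "\<bar>f xs\<bar> \<noteq> \<infinity>"
proof -
  obtain y where "f y < \<infinity>" using assms(1) unfolding proper_fun_def effdom_def by blast
  then have "f xs \<noteq> \<infinity>" using assms(2)[of y] unfolding lagr_def by (cases "f y") auto
  then show ?thesis using assms(1) unfolding proper_fun_def by auto
qed

lemma lagr_saddle_feasible:
  assumes "\<And>l. lagr f A b xs l \<le> lagr f A b xs ls" and "\<bar>f xs\<bar> \<noteq> \<infinity>"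
  shows "A *v xs = b"
proof -
  define r where "r = A *v xs - b"
  have "lagr f A b xs (ls - r) \<le> lagr f A b xs ls" by (rule assms(1))
  then have "- ((ls - r) \<bullet> r) \<le> - (ls \<bullet> r)"
    using assms(2) unfolding lagr_def r_def by (cases "f xs") auto
  then have "r \<bullet> r \<le> 0" by (simp add: inner_diff_left)
  then show ?thesis
    unfolding r_def by (metis eq_iff_diff_eq_0 inner_eq_zero_iff inner_ge_zero order_antisym)
qed

lemma Min_image_mult_sum_le:
  fixes g w :: "'a \<Rightarrow> real"
  assumes "finite S" and "S \<noteq> {}" and "\<And>j. j \<in> S \<Longrightarrow> 0 \<le> w j"
  shows "Min (g ` S) * sum w S \<le> (\<Sum>j\<in>S. w j * g j)"
proof -
  have "Min (g ` S) * sum w S = (\<Sum>j\<in>S. w j * Min (g ` S))"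
    by (subst mult.commute) (rule sum_distrib_right)
  also have "\<dots> \<le> (\<Sum>j\<in>S. w j * g j)"
    using assms by (intro sum_mono mult_left_mono) auto
  finally show ?thesis .
qed

locale accelerated_alm =
  fixes f :: "real^'n \<Rightarrow> ereal" and A :: "real^'n^'m" and b :: "real^'m" and H :: "real^'m^'m"
    and xs :: "real^'n" and ls :: "real^'m"
    and AA a bb c :: "nat \<Rightarrow> real"
    and x :: "nat \<Rightarrow> real^'n" and lam lt z :: "nat \<Rightarrow> real^'m"
  assumes f_proper: "proper_fun f" and f_convex: "convex_fun f"
    and saddle_left: "\<And>l. lagr f A b xs l \<le> lagr f A b xs ls"
    and saddle_right: "\<And>y. lagr f A b xs ls \<le> lagr f A b y ls"
    and H_spd: "sym_pos_def H"
    and a_pos: "\<And>k. a k > 0" and b_pos: "\<And>k. k \<ge> 1 \<Longrightarrow> bb k > 0"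
    and A_step: "\<And>k. AA (Suc k) - AA k \<le> a k"
    and A_eq: "\<And>k. AA k = a k * bb k"
    and A0: "AA 0 = 0" and b0: "bb 0 = 0"
    and c_ge: "\<And>k. c k \<ge> a k"
    and z0: "z 0 = lam 0"
    and lt_Suc: "\<And>k. lt (Suc k) = (1 / (bb k + 1)) *\<^sub>R z k + (bb k / (bb k + 1)) *\<^sub>R lam k"
    and x_min: "\<And>k y. f (x (Suc k)) - ereal (lt (Suc k) \<bullet> (A *v x (Suc k) - b))
                        + ereal (c k / (2 * (bb k + 1)) * Mnormsq H (A *v x (Suc k) - b))
                   \<le> f y - ereal (lt (Suc k) \<bullet> (A *v y - b))
                        + ereal (c k / (2 * (bb k + 1)) * Mnormsq H (A *v y - b))"
    and lam_Suc: "\<And>k. lam (Suc k) = lt (Suc k) - (c k / (bb k + 1)) *\<^sub>R (H *v (A *v x (Suc k) - b))"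
    and z_Suc: "\<And>k. z (Suc k) = z k - a k *\<^sub>R (H *v (A *v x (Suc k) - b))"
begin

(* gap 0 is a junk value, since x 0 is not an iterate; it only enters lyap 0 with factor AA 0 = 0. *)
definition gap :: "nat \<Rightarrow> real" where
  "gap k = real_of_ereal (f xs) - real_of_ereal (f (x k)) + lam k \<bullet> (A *v x k - b)"

definition lyap :: "nat \<Rightarrow> real" where
  "lyap k = AA k * gap k + Mnormsq (matrix_inv H) (z k - ls) / 2"

lemma bb_nonneg: "0 \<le> bb k"
  using b_pos[of k] b0 by (cases k) auto

lemma AA_nonneg: "0 \<le> AA k"
  using A_eq[of k] a_pos[of k] bb_nonneg[of k] by simp

lemma f_xs_real: "f xs = ereal (real_of_ereal (f xs))"
  using lagr_saddle_finite[OF f_proper saddle_right] by (simp add: ereal_real')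

lemma A_xs: "A *v xs = b"
  using lagr_saddle_feasible[OF saddle_left] lagr_saddle_finite[OF f_proper saddle_right] by blast

lemma f_x_real: "f (x (Suc k)) = ereal (real_of_ereal (f (x (Suc k))))"
proof -
  obtain y where "f y < \<infinity>" using f_proper unfolding proper_fun_def effdom_def by blast
  then have "f (x (Suc k)) \<noteq> \<infinity>" using x_min[of k y] by (cases "f y"; cases "f (x (Suc k))") auto
  then show ?thesis using f_proper unfolding proper_fun_def by (cases "f (x (Suc k))") auto
qed

lemma subgradient_x:
  assumes "f u = ereal Fu"
  shows "real_of_ereal (f (x (Suc k))) + lam (Suc k) \<bullet> (A *v u - A *v x (Suc k)) \<le> Fu"
proof -
  have "2 * (c k / (2 * (bb k + 1))) = c k / (bb k + 1)" by (simp add: divide_simps)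
  then show ?thesis
    using penalized_minimizer_subgradient[OF f_convex _ f_x_real assms x_min[of k]] H_spd lam_Suc
    unfolding sym_pos_def_def by simp
qed

lemma gap_nonneg: "0 \<le> gap (Suc k)"
  using subgradient_x[OF f_xs_real, of k] A_xs unfolding gap_def
  by (simp add: inner_diff_right)

lemma gap_le_multiplier: "gap (Suc k) \<le> (lam (Suc k) - ls) \<bullet> (A *v x (Suc k) - b)"
proof -
  have "f xs \<le> f (x (Suc k)) - ereal (ls \<bullet> (A *v x (Suc k) - b))"
    using saddle_right[of "x (Suc k)"] A_xs unfolding lagr_def by simp
  then show ?thesis
    unfolding gap_def by (subst (asm) f_xs_real, subst (asm) f_x_real) (simp add: inner_diff_left)
qed

lemma gap_succ_le:
  assumes "0 < k"
  shows "gap (Suc k) \<le> gap k + (lam (Suc k) - lam k) \<bullet> (A *v x (Suc k) - b)"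
proof -
  obtain k' where k: "k = Suc k'" using assms by (cases k) auto
  show ?thesis
    using subgradient_x[OF f_x_real[of k], of k'] unfolding k gap_def
    by (simp add: inner_diff_left inner_diff_right)
qed

lemma multiplier_combination:
  "AA k *\<^sub>R (lam (Suc k) - lam k) + a k *\<^sub>R (lam (Suc k) - ls)
     = a k *\<^sub>R (z k - ls - c k *\<^sub>R (H *v (A *v x (Suc k) - b)))"
proof -
  have "bb k + 1 \<noteq> 0" using bb_nonneg[of k] by simp
  then have "(bb k + 1) *\<^sub>R lam (Suc k) = z k + bb k *\<^sub>R lam k - c k *\<^sub>R (H *v (A *v x (Suc k) - b))"
    unfolding lam_Suc lt_Suc by (simp add: scaleR_add_right scaleR_diff_right)
  moreover have "AA k *\<^sub>R (lam (Suc k) - lam k) + a k *\<^sub>R (lam (Suc k) - ls)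
      = a k *\<^sub>R ((bb k + 1) *\<^sub>R lam (Suc k) - bb k *\<^sub>R lam k - ls)"
    unfolding A_eq by (simp add: algebra_simps)
  ultimately show ?thesis by simp
qed

lemma lyap_decrease:
  "lyap (Suc k) + (a k)\<^sup>2 * Mnormsq H (A *v x (Suc k) - b) / 2 \<le> lyap k"
proof -
  define r where "r = A *v x (Suc k) - b"
  define w where "w = z k - ls"
  define N where "N = Mnormsq H r"
  have "AA k * gap (Suc k) \<le> AA k * (gap k + (lam (Suc k) - lam k) \<bullet> r)"
    using gap_succ_le[of k] A0 AA_nonneg[of k] unfolding r_def
    by (cases "k = 0") (auto intro: mult_left_mono)
  moreover have "a k * gap (Suc k) \<le> a k * ((lam (Suc k) - ls) \<bullet> r)"
    using gap_le_multiplier[of k] a_pos[of k] unfolding r_def by simp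
  moreover have "AA (Suc k) * gap (Suc k) \<le> (AA k + a k) * gap (Suc k)"
    using A_step[of k] gap_nonneg[of k] by (intro mult_right_mono) auto
  moreover have "AA k * ((lam (Suc k) - lam k) \<bullet> r) + a k * ((lam (Suc k) - ls) \<bullet> r)
      = a k * (w \<bullet> r) - a k * c k * N"
  proof -
    have "AA k * ((lam (Suc k) - lam k) \<bullet> r) + a k * ((lam (Suc k) - ls) \<bullet> r)
        = (AA k *\<^sub>R (lam (Suc k) - lam k) + a k *\<^sub>R (lam (Suc k) - ls)) \<bullet> r"
      by (simp add: inner_add_left)
    also have "\<dots> = a k * (w \<bullet> r) - a k * c k * N"
      unfolding multiplier_combination[of k, folded r_def] w_def[symmetric] N_def Mnormsq_def
      by (simp add: inner_diff_left inner_commute[of "H *v r" r] algebra_simps)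
    finally show ?thesis .
  qed
  moreover have "Mnormsq (matrix_inv H) (z (Suc k) - ls)
      = Mnormsq (matrix_inv H) w - 2 * a k * (w \<bullet> r) + (a k)\<^sup>2 * N"
  proof -
    have "z (Suc k) - ls = w - a k *\<^sub>R (H *v r)" unfolding z_Suc w_def r_def by simp
    then show ?thesis unfolding N_def by (simp add: Mnormsq_matrix_inv_diff[OF H_spd])
  qed
  moreover have "a k * a k * N \<le> a k * c k * N"
    using a_pos[of k] c_ge[of k] Mnormsq_nonneg[OF H_spd, of r] unfolding N_def
    by (intro mult_right_mono mult_left_mono) auto
  \<comment> \<open>the terms \<open>a k * (w \<bullet> r)\<close> cancel, and \<open>c k \<ge> a k\<close> absorbs the rest\<close>
  ultimately show ?thesis
    unfolding lyap_def w_def[symmetric] N_def[symmetric] r_def[symmetric]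
    by (simp add: algebra_simps power2_eq_square)
qed

lemma lyap_telescope:
  "lyap (Suc k) + (\<Sum>j=0..k. (a j)\<^sup>2 * Mnormsq H (A *v x (Suc j) - b)) / 2 \<le> lyap 0"
proof (induction k)
  case 0
  then show ?case using lyap_decrease[of 0] by simp
next
  case (Suc k)
  then show ?case
    using lyap_decrease[of "Suc k"] by (simp add: sum.atLeast0_atMost_Suc add_divide_distrib)
qed

lemma lyap_0: "lyap 0 = Mnormsq (matrix_inv H) (lam 0 - ls) / 2"
  unfolding lyap_def A0 z0 by simp

lemma lyap_lower: "AA (Suc k) * gap (Suc k) \<le> lyap (Suc k)"
  using Mnormsq_matrix_inv_nonneg[OF H_spd] unfolding lyap_def by simp

lemma gap_bound:
  "gap (Suc k) \<le> Mnormsq (matrix_inv H) (lam 0 - ls) / (2 * AA (Suc k))"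
proof -
  have "0 < AA (Suc k)" using A_eq a_pos b_pos by simp
  moreover have "0 \<le> (\<Sum>j=0..k. (a j)\<^sup>2 * Mnormsq H (A *v x (Suc j) - b))"
    using Mnormsq_nonneg[OF H_spd] by (intro sum_nonneg) simp
  ultimately show ?thesis
    using lyap_lower[of k] lyap_telescope[of k] lyap_0 by (simp add: field_simps)
qed

lemma residual_bound:
  "Min ((\<lambda>j. Mnormsq H (A *v x (Suc j) - b)) ` {0..k})
     \<le> Mnormsq (matrix_inv H) (lam 0 - ls) / (\<Sum>j=0..k. (a j)\<^sup>2)"
proof -
  have "0 < (\<Sum>j=0..k. (a j)\<^sup>2)"
    by (intro sum_pos) (simp_all add: a_pos[THEN less_imp_neq, THEN not_sym])
  moreover have "0 \<le> lyap (Suc k)"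
    using lyap_lower[of k] AA_nonneg[of "Suc k"] gap_nonneg[of k]
    by (meson mult_nonneg_nonneg order_trans)
  ultimately show ?thesis
    using Min_image_mult_sum_le[of "{0..k}" "\<lambda>j. (a j)\<^sup>2" "\<lambda>j. Mnormsq H (A *v x (Suc j) - b)"]
      lyap_telescope[of k] lyap_0
    by (simp add: field_simps)
qed

lemma objective_gap_bound:
  assumes "k \<ge> 1"
  shows "f xs - f (x k) + ereal (lam k \<bullet> (A *v x k - b))
           \<le> ereal (Mnormsq (matrix_inv H) (lam 0 - ls) / (2 * AA k))"
proof -
  obtain k' where k: "k = Suc k'" using assms by (cases k) auto
  have "f xs - f (x k) + ereal (lam k \<bullet> (A *v x k - b)) = ereal (gap k)"
    unfolding k gap_def by (subst f_xs_real, subst f_x_real) simp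
  then show ?thesis using gap_bound[of k'] unfolding k by simp
qed

end

theorem corollary1:
  fixes f :: "real^'n \<Rightarrow> ereal"
    and A :: "real^'n^'m" and b :: "real^'m"
    and H :: "real^'m^'m"
    and xs :: "real^'n" and ls :: "real^'m"
    and AA a bb c :: "nat \<Rightarrow> real"
    and x :: "nat \<Rightarrow> real^'n"
    and lam lt z :: "nat \<Rightarrow> real^'m"
  assumes f_closed: "closed_fun f" and f_proper: "proper_fun f" and f_convex: "convex_fun f"
    and qual: "\<exists>y\<in>rel_interior (effdom f). A *v y = b"
    and saddle: "\<forall>y l. lagr f A b xs l \<le> lagr f A b xs ls \<and> lagr f A b xs ls \<le> lagr f A b y ls"
    and H_spd: "sym_pos_def H"
    and a_pos: "\<forall>k. a k > 0" and c_pos: "\<forall>k. c k > 0" and b_pos: "\<forall>k\<ge>1. bb k > 0"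
    and A_step: "\<forall>k. AA (Suc k) - AA k \<le> a k"
    and A_eq: "\<forall>k. AA k = a k * bb k"
    and A0: "AA 0 = 0" and b0: "bb 0 = 0"
    and c_ge: "\<forall>k. c k \<ge> a k"
    and z0: "z 0 = lam 0"
    and lt_def: "\<forall>k. lt (Suc k) = (1 / (bb k + 1)) *\<^sub>R z k + (bb k / (bb k + 1)) *\<^sub>R lam k"
    and x_min: "\<forall>k y. f (x (Suc k)) - ereal (lt (Suc k) \<bullet> (A *v x (Suc k) - b))
                        + ereal (c k / (2 * (bb k + 1)) * Mnormsq H (A *v x (Suc k) - b))
                   \<le> f y - ereal (lt (Suc k) \<bullet> (A *v y - b))
                        + ereal (c k / (2 * (bb k + 1)) * Mnormsq H (A *v y - b))"
    and lam_def: "\<forall>k. lam (Suc k) = lt (Suc k) - (c k / (bb k + 1)) *\<^sub>R (H *v (A *v x (Suc k) - b))"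
    and z_def: "\<forall>k. z (Suc k) = z k - a k *\<^sub>R (H *v (A *v x (Suc k) - b))"
  shows "(\<forall>k\<ge>1. f xs - f (x k) + ereal (lam k \<bullet> (A *v x k - b))
            \<le> ereal (Mnormsq (matrix_inv H) (lam 0 - ls) / (2 * AA k)))
       \<and> (\<forall>k. Min ((\<lambda>j. Mnormsq H (A *v x (Suc j) - b)) ` {0..k})
            \<le> Mnormsq (matrix_inv H) (lam 0 - ls) / (\<Sum>j=0..k. (a j)\<^sup>2))"
proof -
  interpret accelerated_alm f A b H xs ls AA a bb c x lam lt z
    using f_proper f_convex saddle H_spd a_pos b_pos A_step A_eq A0 b0 c_ge z0 lt_def x_min lam_def z_def
    by unfold_locales auto
  show ?thesis
    using objective_gap_bound residual_bound by blast
qed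

end
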